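(* Let $S$ be a monoid. Every Rees artinian right $S$-act has only finitely many maximal (proper) subacts.
   Context: A right $S$-act is Rees artinian if its set of subacts satisfies the descending chain condition. A maximal subact is a proper subact not properly contained in any other proper subact. *)

theory Defs
  imports Main
begin

definition right_act :: "'a set \<Rightarrow> ('a \<Rightarrow> 's::monoid_mult \<Rightarrow> 'a) \<Rightarrow> bool" where
  "right_act A act \<longleftrightarrow>
     (\<forall>a\<in>A. \<forall>s. act a s \<in> A) \<and>
     (\<forall>a\<in>A. act a 1 = a) \<and>
     (\<forall>a\<in>A. \<forall>s t. act (act a s) t = act a (s * t))"

definition subact :: "'a set \<Rightarrow> ('a \<Rightarrow> 's::monoid_mult \<Rightarrow> 'a) \<Rightarrow> 'a set \<Rightarrow> bool" where
  "subact A act B \<longleftrightarrow> B \<subseteq> A \<and> (\<forall>b\<in>B. \<forall>s. act b s \<in> B)"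

definition rees_artinian :: "'a set \<Rightarrow> ('a \<Rightarrow> 's::monoid_mult \<Rightarrow> 'a) \<Rightarrow> bool" where
  "rees_artinian A act \<longleftrightarrow>
     (\<forall>f :: nat \<Rightarrow> 'a set. (\<forall>n. subact A act (f n)) \<and> (\<forall>n. f (Suc n) \<subseteq> f n)
        \<longrightarrow> (\<exists>N. \<forall>n\<ge>N. f n = f N))"

definition maximal_subact :: "'a set \<Rightarrow> ('a \<Rightarrow> 's::monoid_mult \<Rightarrow> 'a) \<Rightarrow> 'a set \<Rightarrow> bool" where
  "maximal_subact A act B \<longleftrightarrow>
     subact A act B \<and> B \<noteq> A \<and>
     \<not> (\<exists>C. subact A act C \<and> C \<noteq> A \<and> B \<subset> C)"

end

theory Submission
  imports Defs
begin

text \<open>Two distinct maximal subacts cover the act, so an element outside one maximal subact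
  lies in every other. Hence intersecting infinitely many distinct maximal subacts one at a
  time gives a strictly descending chain of subacts, contradicting the artinian condition.\<close>

lemma maximal_subact_union_eq:
  assumes M: "maximal_subact A act M" and M': "maximal_subact A act M'" and "M \<noteq> M'"
  shows "M \<union> M' = A"
proof -
  have M_max: "\<And>C. subact A act C \<Longrightarrow> C \<noteq> A \<Longrightarrow> \<not> M \<subset> C"
    and M'_max: "\<And>C. subact A act C \<Longrightarrow> C \<noteq> A \<Longrightarrow> \<not> M' \<subset> C"
    using M M' unfolding maximal_subact_def by auto
  have "\<not> M' \<subseteq> M"
  proof
    assume "M' \<subseteq> M"
    with \<open>M \<noteq> M'\<close> have "M' \<subset> M" by auto
    with M'_max M show False unfolding maximal_subact_def by auto
  qed
  then have "M \<subset> M \<union> M'" by auto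
  moreover have "subact A act (M \<union> M')"
    using M M' unfolding maximal_subact_def subact_def by auto
  ultimately show ?thesis using M_max by auto
qed

lemma Inter_maximal_subacts_not_subset:
  assumes M: "maximal_subact A act M"
    and F: "\<And>B. B \<in> F \<Longrightarrow> maximal_subact A act B \<and> B \<noteq> M"
  shows "\<not> \<Inter>F \<subseteq> M"
proof -
  obtain a where a: "a \<in> A" "a \<notin> M"
    using M unfolding maximal_subact_def subact_def by auto
  have "a \<in> B" if "B \<in> F" for B
    using maximal_subact_union_eq[OF M, of B] F[OF that] a by auto
  with a show ?thesis by auto
qed

lemma subact_INT:
  assumes "I \<noteq> {}" and "\<And>i. i \<in> I \<Longrightarrow> subact A act (B i)"
  shows "subact A act (\<Inter>i\<in>I. B i)"
proof -
  obtain i where "i \<in> I" using \<open>I \<noteq> {}\<close> by auto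
  then have "(\<Inter>i\<in>I. B i) \<subseteq> A" using assms(2)[of i] unfolding subact_def by auto
  then show ?thesis using assms(2) unfolding subact_def by auto
qed

theorem mainTheorem9:
  fixes A :: "'a set" and act :: "'a \<Rightarrow> 's::monoid_mult \<Rightarrow> 'a"
  assumes "right_act A act"
    and "rees_artinian A act"
  shows "finite {B. maximal_subact A act B}"
proof (rule ccontr)
  assume "infinite {B. maximal_subact A act B}"
  then obtain g :: "nat \<Rightarrow> 'a set"
    where "inj g" and g_range: "range g \<subseteq> {B. maximal_subact A act B}"
    using infinite_countable_subset by blast
  have g_max: "maximal_subact A act (g i)" for i
    using g_range by auto
  define f where "f n = (\<Inter>i\<le>n. g i)" for n
  have "\<forall>n. subact A act (f n)"
    unfolding f_def using g_max by (intro allI subact_INT) (auto simp: maximal_subact_def)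
  moreover have "\<forall>n. f (Suc n) \<subseteq> f n"
    unfolding f_def by auto
  ultimately have "\<exists>N. \<forall>n\<ge>N. f n = f N"
    using assms(2) unfolding rees_artinian_def by blast
  then obtain N where "\<forall>n\<ge>N. f n = f N" ..
  then have "f N = f (Suc N)"
    by (metis le_SucI order_refl)
  also have "\<dots> \<subseteq> g (Suc N)"
    unfolding f_def by auto
  finally have "f N \<subseteq> g (Suc N)" .
  moreover have "\<not> \<Inter>(g ` {..N}) \<subseteq> g (Suc N)"
    using \<open>inj g\<close> g_max
    by (intro Inter_maximal_subacts_not_subset) (auto dest: injD)
  ultimately show False
    unfolding f_def by simp
qed

end
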